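(* Let $\mathcal{S}$ be a state space, let $\mathcal{A}\subset\mathbb{R}^d$ be an action space of finite positive Lebesgue measure, let $R:\mathcal{S}\times\mathcal{A}\to\mathbb{R}$ be a reward function, let $\tau(\cdot\mid s,a)$ be a transition kernel, and let $\gamma\in(0,1)$ and $\tilde{\alpha}>0$. Let $\mathcal{Q}$ be a probability distribution over (measurable) functions $Q:\mathcal{S}\times\mathcal{A}\to\mathbb{R}$ such that for every $(s,a)$ the random variable $Q(s,a)$, $Q\sim\mathcal{Q}$, has bounded support and is sub-Gaussian with mean $\mu(s,a)$ and variance proxy $\sigma^2(s,a)$. For a next state $s'$ define $$\mathcal{T}^{*}Q(s,a)=R(s,a)+\gamma\,\mathbb{E}_{Q\sim\mathcal{Q}}\Big[\tilde{\alpha}\log\Big(\int_{\mathcal{A}}\exp\big(\tilde{\alpha}^{-1}Q(s',a')\big)\,da'\Big)\Big],$$ and let $$\mathcal{T}^{*}\mu(s,a)=R(s,a)+\gamma\,\mathbb{E}_{s'\sim\tau(\cdot\mid s,a)}\Big[\tilde{\alpha}\log\Big(\int_{\mathcal{A}}\exp\big(\tilde{\alpha}^{-1}\mu(s',a')\big)\,da'\Big)\Big].$$ Define the overestimation error $\epsilon(s,a)=\mathbb{E}_{s'\sim\tau(\cdot\mid s,a)}\big[\mathcal{T}^{*}Q(s,a)\big]-\mathcal{T}^{*}\mu(s,a)$. Then for all $(s,a)$, $$\epsilon(s,a)\le\frac{\gamma}{2\tilde{\alpha}}\,\mathbb{E}_{s'\sim\tau(\cdot\mid s,a)}\Big[\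sup_{a'\in\mathcal{A}}\sigma^2(s',a')\Big].$$
   Context: A real random variable $X$ with mean $\mu=\mathbb{E}[X]$ is called sub-Gaussian with variance proxy $\sigma^2$ if $\mathbb{E}[\exp(\lambda X)]\le\exp(\lambda\mu+\tfrac12\lambda^2\sigma^2)$ for all $\lambda\in\mathbb{R}$. Here $\mu(s,a)=\mathbb{E}_{Q\sim\mathcal{Q}}[Q(s,a)]$, and all expectations are assumed well defined. *)

theory Defs
  imports "HOL-Probability.Probability"
begin

definition soft_value :: "real \<Rightarrow> 'a::euclidean_space set \<Rightarrow> ('a \<Rightarrow> real) \<Rightarrow> real" where
  "soft_value \<alpha> A f = \<alpha> * ln (\<integral>a\<in>A. exp (f a / \<alpha>) \<partial>lborel)"

definition sub_gaussian :: "'b measure \<Rightarrow> ('b \<Rightarrow> real) \<Rightarrow> real \<Rightarrow> bool" where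
  "sub_gaussian M X \<sigma>2 \<longleftrightarrow>
     (\<forall>l::real. (\<integral>x. exp (l * X x) \<partial>M) \<le> exp (l * (\<integral>x. X x \<partial>M) + l\<^sup>2 * \<sigma>2 / 2))"

definition mean_Q :: "('s \<Rightarrow> 'a \<Rightarrow> real) measure \<Rightarrow> 's \<Rightarrow> 'a \<Rightarrow> real" where
  "mean_Q QQ s a = (\<integral>Q. Q s a \<partial>QQ)"

definition bellman_Q ::
  "('s \<Rightarrow> 'a \<Rightarrow> real) \<Rightarrow> real \<Rightarrow> real \<Rightarrow> 'a::euclidean_space set
     \<Rightarrow> ('s \<Rightarrow> 'a \<Rightarrow> real) measure \<Rightarrow> 's \<Rightarrow> 'a \<Rightarrow> 's \<Rightarrow> real" where
  "bellman_Q R \<gamma> \<alpha> A QQ s a s' = R s a + \<gamma> * (\<integral>Q. soft_value \<alpha> A (Q s') \<partial>QQ)"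

definition bellman_mu ::
  "('s \<Rightarrow> 'a \<Rightarrow> real) \<Rightarrow> real \<Rightarrow> real \<Rightarrow> 'a::euclidean_space set
     \<Rightarrow> ('s \<Rightarrow> 'a \<Rightarrow> 's measure) \<Rightarrow> ('s \<Rightarrow> 'a \<Rightarrow> real) \<Rightarrow> 's \<Rightarrow> 'a \<Rightarrow> real" where
  "bellman_mu R \<gamma> \<alpha> A \<tau> \<mu> s a = R s a + \<gamma> * (\<integral>s'. soft_value \<alpha> A (\<mu> s') \<partial>\<tau> s a)"

definition overest_error ::
  "('s \<Rightarrow> 'a \<Rightarrow> real) \<Rightarrow> real \<Rightarrow> real \<Rightarrow> 'a::euclidean_space set
     \<Rightarrow> ('s \<Rightarrow> 'a \<Rightarrow> 's measure) \<Rightarrow> ('s \<Rightarrow> 'a \<Rightarrow> real) measure \<Rightarrow> 's \<Rightarrow> 'a \<Rightarrow> real" where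
  "overest_error R \<gamma> \<alpha> A \<tau> QQ s a =
     (\<integral>s'. bellman_Q R \<gamma> \<alpha> A QQ s a s' \<partial>\<tau> s a) - bellman_mu R \<gamma> \<alpha> A \<tau> (mean_Q QQ) s a"

end

theory Submission
  imports Defs
begin

(* Write Z(g) for the partition function of g over A, the integral of exp (g / alpha), so that
   soft_value = alpha ln Z. For random Q, Jensen's inequality for the concave logarithm gives
   E ln Z(Q) <= ln E Z(Q), and Tonelli together with the sub-Gaussian moment bound
   E exp (Q(a) / alpha) <= exp (mu(a) / alpha + sigma2(a) / (2 alpha^2)) gives
   E Z(Q) <= exp (sup sigma2 / (2 alpha^2)) Z(mu). Hence E soft_value(Q) exceeds soft_value(mu)
   by at most sup sigma2 / (2 alpha) at every next state; integrate over the transition kernel.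

   If Z(mu) is infinite, soft_value(mu) is the junk value 0 and Z(Q) must be infinite almost
   surely. On a sublevel set B of mu, Cauchy-Schwarz gives Z_B(mu)^2 <= Z(Q) Z_B(2 mu - Q), and
   the reflected field 2 mu - Q obeys the same moment bound, so
   Z_B(mu) E[1/Z(Q)] <= exp (sup sigma2 / (2 alpha^2)). As Z_B(mu) is unbounded, E[1/Z(Q)] = 0. *)

definition soft_partition ::
    "real \<Rightarrow> 'a::euclidean_space set \<Rightarrow> ('a \<Rightarrow> real) \<Rightarrow> ennreal" where
  "soft_partition \<alpha> A g = (\<integral>\<^sup>+a\<in>A. ennreal (exp (g a / \<alpha>)) \<partial>lborel)"

lemma soft_value_eq_ln_soft_partition:
  assumes [measurable]: "A \<in> sets lborel" "g \<in> borel_measurable lborel"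
  shows "soft_value \<alpha> A g = \<alpha> * ln (enn2real (soft_partition \<alpha> A g))"
proof -
  have "(\<integral>a\<in>A. exp (g a / \<alpha>) \<partial>lborel)
      = (\<integral>a. exp (g a / \<alpha>) * indicator A a \<partial>lborel)"
    unfolding set_lebesgue_integral_def by (simp add: mult.commute)
  also have "\<dots> = enn2real (soft_partition \<alpha> A g)"
    unfolding soft_partition_def
    by (subst integral_eq_nn_integral)
      (auto intro!: arg_cong[where f=enn2real] nn_integral_cong simp: ennreal_mult indicator_def)
  finally show ?thesis unfolding soft_value_def by simp
qed

lemma soft_partition_pos:
  assumes A[measurable]: "A \<in> sets lborel" and [measurable]: "g \<in> borel_measurable lborel"
    and "0 < emeasure lborel A"
  shows "0 < soft_partition \<alpha> A g"
proof (rule ccontr)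
  assume "\<not> 0 < soft_partition \<alpha> A g"
  then have "AE a in lborel. ennreal (exp (g a / \<alpha>)) * indicator A a = 0"
    by (simp add: soft_partition_def nn_integral_0_iff_AE)
  then have "AE a in lborel. a \<notin> A"
    by eventually_elim (simp add: indicator_def)
  then have "A \<in> null_sets lborel"
    using AE_iff_null_sets[OF A] by simp
  with \<open>0 < emeasure lborel A\<close> show False
    by (auto dest: null_setsD1)
qed

lemma measurable_soft_partition[measurable]:
  assumes [measurable]: "B \<in> sets lborel" "(\<lambda>(x, a). g x a) \<in> borel_measurable (N \<Otimes>\<^sub>M lborel)"
  shows "(\<lambda>x. soft_partition \<alpha> B (g x)) \<in> borel_measurable N"
  unfolding soft_partition_def by measurable

lemma soft_partition_less_top:
  assumes [measurable]: "B \<in> sets lborel" "g \<in> borel_measurable lborel"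
    and "emeasure lborel B < \<infinity>" "0 < \<alpha>" "\<And>a. a \<in> B \<Longrightarrow> g a \<le> K"
  shows "soft_partition \<alpha> B g < \<infinity>"
proof -
  have "soft_partition \<alpha> B g \<le> (\<integral>\<^sup>+a. ennreal (exp (K / \<alpha>)) * indicator B a \<partial>lborel)"
    unfolding soft_partition_def using assms(4,5)
    by (intro nn_integral_mono) (auto simp: indicator_def divide_right_mono intro!: ennreal_leI)
  also have "\<dots> = ennreal (exp (K / \<alpha>)) * emeasure lborel B"
    by (rule nn_integral_cmult_indicator[OF assms(1)])
  also have "\<dots> < \<infinity>"
    using assms(3) by (simp add: ennreal_mult_less_top)
  finally show ?thesis .
qed

lemma SUP_soft_partition_sublevel:
  assumes [measurable]: "A \<in> sets lborel" "g \<in> borel_measurable lborel"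
  shows "(SUP n::nat. soft_partition \<alpha> {a\<in>A. g a \<le> real n} g) = soft_partition \<alpha> A g"
proof -
  let ?D = "density lborel (\<lambda>a. ennreal (exp (g a / \<alpha>)))"
  have partition_eq: "soft_partition \<alpha> B g = emeasure ?D B" if "B \<in> sets lborel" for B
    using that by (simp add: soft_partition_def emeasure_density)
  have sublevel[measurable]: "{a\<in>A. g a \<le> real n} \<in> sets lborel" for n
    by measurable
  have "(SUP n. soft_partition \<alpha> {a\<in>A. g a \<le> real n} g) = (SUP n. emeasure ?D {a\<in>A. g a \<le> real n})"
    by (simp add: partition_eq sublevel)
  also have "\<dots> = emeasure ?D (\<Union>n. {a\<in>A. g a \<le> real n})"
    by (rule SUP_emeasure_incseq) (auto simp: incseq_def)
  also have "(\<Union>n. {a\<in>A. g a \<le> real n}) = A"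
    using real_arch_simple by blast
  finally show ?thesis
    by (simp add: partition_eq[OF assms(1)])
qed

lemma soft_partition_Cauchy_Schwarz:
  assumes [measurable]: "A \<in> sets lborel" "B \<in> sets lborel"
    "g \<in> borel_measurable lborel" "h \<in> borel_measurable lborel"
    and "B \<subseteq> A"
  shows "(soft_partition \<alpha> B (\<lambda>a. (g a + h a) / 2))\<^sup>2
    \<le> soft_partition \<alpha> A g * soft_partition \<alpha> B h"
proof -
  let ?G = "\<lambda>a. ennreal (exp (g a / (2 * \<alpha>))) * indicator A a"
  let ?H = "\<lambda>a. ennreal (exp (h a / (2 * \<alpha>))) * indicator B a"
  have GH: "?G a * ?H a = ennreal (exp ((g a + h a) / 2 / \<alpha>)) * indicator B a" for a
    using \<open>B \<subseteq> A\<close>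
    by (auto simp: indicator_def ennreal_mult[symmetric] mult_exp_exp add_divide_distrib)
  have G2: "?G a ^ 2 = ennreal (exp (g a / \<alpha>)) * indicator A a" for a
    by (auto simp: indicator_def ennreal_power exp_double[symmetric])
  have H2: "?H a ^ 2 = ennreal (exp (h a / \<alpha>)) * indicator B a" for a
    by (auto simp: indicator_def ennreal_power exp_double[symmetric])
  have "(\<integral>\<^sup>+a. ?G a * ?H a \<partial>lborel)\<^sup>2
      \<le> (\<integral>\<^sup>+a. ?G a ^ 2 \<partial>lborel) * (\<integral>\<^sup>+a. ?H a ^ 2 \<partial>lborel)"
    by (rule Cauchy_Schwarz_nn_integral) measurable
  then show ?thesis
    unfolding soft_partition_def by (simp only: GH G2 H2)
qed

lemma (in prob_space) sub_gaussian_variance_nonneg: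
  assumes "integrable M X" "integrable M (\<lambda>x. exp (X x))" "sub_gaussian M X \<sigma>2"
  shows "0 \<le> \<sigma>2"
proof -
  have "exp (expectation X) \<le> expectation (\<lambda>x. exp (X x))"
    by (rule jensens_inequality[where I=UNIV]) (use assms exp_convex in auto)
  also have "\<dots> \<le> exp (expectation X + \<sigma>2 / 2)"
    using assms(3) unfolding sub_gaussian_def by (auto dest: spec[of _ 1])
  finally show ?thesis by simp
qed

lemma (in prob_space) expectation_ln_le_ln_expectation:
  fixes Z :: "'a \<Rightarrow> real"
  assumes "integrable M Z" "AE x in M. 0 < Z x" "integrable M (\<lambda>x. ln (Z x))"
  shows "expectation (\<lambda>x. ln (Z x)) \<le> ln (expectation Z)"
proof -
  have "- ln (expectation Z) \<le> expectation (\<lambda>x. - ln (Z x))"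
    using jensens_inequality[of Z "{0<..}" 0 0 "\<lambda>x. - ln x"] assms ln_concave
    by (simp add: concave_on_def)
  then show ?thesis by simp
qed

locale sub_gaussian_random_field = prob_space M
  for M :: "'q measure" and f :: "'q \<Rightarrow> 'a::euclidean_space \<Rightarrow> real"
    and \<sigma>2 :: "'a \<Rightarrow> real" and A :: "'a set" and \<alpha> :: real +
  assumes measurable_f[measurable]: "(\<lambda>(Q, a). f Q a) \<in> borel_measurable (M \<Otimes>\<^sub>M lborel)"
    and sets_A[measurable]: "A \<in> sets lborel"
    and emeasure_A_pos: "0 < emeasure lborel A"
    and emeasure_A_finite: "emeasure lborel A < \<infinity>"
    and alpha_pos: "0 < \<alpha>"
    and bounded: "\<And>a. \<exists>B. AE Q in M. \<bar>f Q a\<bar> \<le> B"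
    and sub_gaussian: "\<And>a. sub_gaussian M (\<lambda>Q. f Q a) (\<sigma>2 a)"
    and bdd_above_variance: "bdd_above (\<sigma>2 ` A)"
begin

sublocale pair_sigma_finite M lborel
  by (simp add: pair_sigma_finite_def sigma_finite_measure_axioms
      lborel.sigma_finite_measure_axioms)

definition mean :: "'a \<Rightarrow> real" where
  "mean a = expectation (\<lambda>Q. f Q a)"

definition sup_variance :: real where
  "sup_variance = (SUP a\<in>A. \<sigma>2 a)"

lemma measurable_section[measurable]: "Q \<in> space M \<Longrightarrow> f Q \<in> borel_measurable lborel"
  using measurable_comp[OF measurable_Pair1' measurable_f] by (simp add: o_def)

lemma measurable_mean[measurable]: "mean \<in> borel_measurable lborel"
proof -
  have "(\<lambda>(a, Q). f Q a) \<in> borel_measurable (lborel \<Otimes>\<^sub>M M)"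
    using measurable_pair_swap[OF measurable_f] by simp
  then show ?thesis
    unfolding mean_def by measurable
qed

lemma integrable_exp_field_at: "integrable M (\<lambda>Q. exp (l * f Q a))"
proof -
  obtain B where B: "AE Q in M. \<bar>f Q a\<bar> \<le> B"
    using bounded by blast
  then have "AE Q in M. norm (exp (l * f Q a)) \<le> exp (\<bar>l\<bar> * B)"
  proof eventually_elim
    case (elim Q)
    have "l * f Q a \<le> \<bar>l\<bar> * \<bar>f Q a\<bar>"
      by (simp add: abs_mult[symmetric])
    also have "\<dots> \<le> \<bar>l\<bar> * B"
      using elim by (rule mult_left_mono) simp
    finally show ?case by simp
  qed
  then show ?thesis
    by (intro integrable_const_bound) auto
qed

lemma integrable_field_at: "integrable M (\<lambda>Q. f Q a)"
proof -
  obtain B where "AE Q in M. \<bar>f Q a\<bar> \<le> B"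
    using bounded by blast
  then show ?thesis
    by (intro integrable_const_bound[where B=B]) auto
qed

lemma variance_nonneg: "0 \<le> \<sigma>2 a"
  using sub_gaussian_variance_nonneg[OF integrable_field_at integrable_exp_field_at[of 1, simplified]
      sub_gaussian] .

lemma variance_le_sup_variance:
  assumes "a \<in> A"
  shows "\<sigma>2 a \<le> sup_variance"
  unfolding sup_variance_def using assms bdd_above_variance by (rule cSUP_upper)

lemma sup_variance_nonneg: "0 \<le> sup_variance"
proof -
  obtain a where "a \<in> A"
    using emeasure_A_pos by fastforce
  then show ?thesis
    using variance_nonneg[of a] variance_le_sup_variance[of a] by linarith
qed

(* l = 1 gives the field itself, l = -1 its reflection 2 mean - f about the mean. *)
lemma nn_integral_exp_deviation_le:
  assumes "a \<in> A" "l\<^sup>2 \<le> 1"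
  shows "(\<integral>\<^sup>+Q. ennreal (exp ((mean a + l * (f Q a - mean a)) / \<alpha>)) \<partial>M)
    \<le> ennreal (exp (sup_variance / (2 * \<alpha>\<^sup>2)) * exp (mean a / \<alpha>))"
proof -
  have split: "exp ((mean a + l * (f Q a - mean a)) / \<alpha>)
      = exp ((1 - l) * mean a / \<alpha>) * exp (l / \<alpha> * f Q a)" for Q
  proof -
    have "(mean a + l * (f Q a - mean a)) / \<alpha> = (1 - l) * mean a / \<alpha> + l / \<alpha> * f Q a"
      using alpha_pos by (simp add: field_simps)
    then show ?thesis by (simp add: mult_exp_exp)
  qed
  have mgf: "expectation (\<lambda>Q. exp (l / \<alpha> * f Q a))
      \<le> exp (l / \<alpha> * mean a + (l / \<alpha>)\<^sup>2 * \<sigma>2 a / 2)"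
    using sub_gaussian[of a] unfolding sub_gaussian_def mean_def by blast
  have "l\<^sup>2 * \<sigma>2 a \<le> sup_variance"
    using mult_right_mono[OF assms(2) variance_nonneg[of a]] variance_le_sup_variance[OF assms(1)]
    by simp
  then have exponent: "(1 - l) * mean a / \<alpha> + (l / \<alpha> * mean a + (l / \<alpha>)\<^sup>2 * \<sigma>2 a / 2)
      \<le> sup_variance / (2 * \<alpha>\<^sup>2) + mean a / \<alpha>"
    using alpha_pos by (simp add: field_simps power2_eq_square)
  have "(\<integral>\<^sup>+Q. ennreal (exp ((mean a + l * (f Q a - mean a)) / \<alpha>)) \<partial>M)
      = ennreal (exp ((1 - l) * mean a / \<alpha>) * expectation (\<lambda>Q. exp (l / \<alpha> * f Q a)))"
    unfolding split using integrable_exp_field_at[of "l / \<alpha>" a]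
    by (subst nn_integral_eq_integral) auto
  also have "\<dots> \<le> ennreal (exp ((1 - l) * mean a / \<alpha>)
      * exp (l / \<alpha> * mean a + (l / \<alpha>)\<^sup>2 * \<sigma>2 a / 2))"
    using mgf by (intro ennreal_leI mult_left_mono) simp_all
  also have "\<dots> \<le> ennreal (exp (sup_variance / (2 * \<alpha>\<^sup>2)) * exp (mean a / \<alpha>))"
    using exponent by (intro ennreal_leI) (simp add: mult_exp_exp)
  finally show ?thesis .
qed

lemma nn_integral_soft_partition_deviation_le:
  assumes [measurable]: "B \<in> sets lborel" and "B \<subseteq> A" "l\<^sup>2 \<le> 1"
  shows "(\<integral>\<^sup>+Q. soft_partition \<alpha> B (\<lambda>a. mean a + l * (f Q a - mean a)) \<partial>M)
    \<le> ennreal (exp (sup_variance / (2 * \<alpha>\<^sup>2))) * soft_partition \<alpha> B mean"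
proof -
  let ?c = "exp (sup_variance / (2 * \<alpha>\<^sup>2))"
  let ?g = "\<lambda>Q a. ennreal (exp ((mean a + l * (f Q a - mean a)) / \<alpha>)) * indicator B a"
  have "(\<integral>\<^sup>+Q. soft_partition \<alpha> B (\<lambda>a. mean a + l * (f Q a - mean a)) \<partial>M)
      = (\<integral>\<^sup>+a. \<integral>\<^sup>+Q. ?g Q a \<partial>M \<partial>lborel)"
    unfolding soft_partition_def by (rule Fubini'[symmetric]) measurable
  also have "\<dots> \<le> (\<integral>\<^sup>+a. ennreal ?c * (ennreal (exp (mean a / \<alpha>)) * indicator B a) \<partial>lborel)"
  proof (intro nn_integral_mono)
    fix a
    show "(\<integral>\<^sup>+Q. ?g Q a \<partial>M) \<le> ennreal ?c * (ennreal (exp (mean a / \<alpha>)) * indicator B a)"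
      using nn_integral_exp_deviation_le[of a l] assms(2,3)
      by (cases "a \<in> B") (auto simp: ennreal_mult[symmetric])
  qed
  also have "\<dots> = ennreal ?c * soft_partition \<alpha> B mean"
    unfolding soft_partition_def by (rule nn_integral_cmult) measurable
  finally show ?thesis .
qed

lemma nn_integral_soft_partition_le:
  "(\<integral>\<^sup>+Q. soft_partition \<alpha> A (f Q) \<partial>M)
    \<le> ennreal (exp (sup_variance / (2 * \<alpha>\<^sup>2))) * soft_partition \<alpha> A mean"
  using nn_integral_soft_partition_deviation_le[OF sets_A, of 1] by simp

lemma soft_partition_mean_sq_le:
  assumes [measurable]: "B \<in> sets lborel" and "B \<subseteq> A" "Q \<in> space M"
  shows "(soft_partition \<alpha> B mean)\<^sup>2
    \<le> soft_partition \<alpha> A (f Q) * soft_partition \<alpha> B (\<lambda>a. 2 * mean a - f Q a)"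
proof -
  have "(\<lambda>a. (f Q a + (2 * mean a - f Q a)) / 2) = mean"
    by auto
  then show ?thesis
    using soft_partition_Cauchy_Schwarz[OF sets_A assms(1) _ _ assms(2), of "f Q"
        "\<lambda>a. 2 * mean a - f Q a" \<alpha>] assms(3)
    by simp
qed

lemma nn_integral_inverse_soft_partition_le:
  assumes [measurable]: "B \<in> sets lborel" and "B \<subseteq> A" "soft_partition \<alpha> B mean < \<infinity>"
  shows "(\<integral>\<^sup>+Q. inverse (soft_partition \<alpha> A (f Q)) \<partial>M) * soft_partition \<alpha> B mean
    \<le> ennreal (exp (sup_variance / (2 * \<alpha>\<^sup>2)))"
proof -
  define W where "W = soft_partition \<alpha> B mean"
  define V where "V Q = soft_partition \<alpha> B (\<lambda>a. 2 * mean a - f Q a)" for Q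
  let ?x = "\<integral>\<^sup>+Q. inverse (soft_partition \<alpha> A (f Q)) \<partial>M"
  let ?c = "ennreal (exp (sup_variance / (2 * \<alpha>\<^sup>2)))"
  have pointwise: "W\<^sup>2 * inverse (soft_partition \<alpha> A (f Q)) \<le> V Q" if Q: "Q \<in> space M" for Q
  proof (cases "soft_partition \<alpha> A (f Q) = \<infinity>")
    case False
    let ?Z = "soft_partition \<alpha> A (f Q)"
    have "?Z \<noteq> 0"
      using soft_partition_pos[OF sets_A measurable_section[OF Q] emeasure_A_pos, where \<alpha>=\<alpha>]
      by simp
    have "W\<^sup>2 * inverse ?Z \<le> ?Z * V Q * inverse ?Z"
      using soft_partition_mean_sq_le[OF assms(1,2) Q]
      by (intro mult_right_mono) (simp_all add: W_def V_def)
    also have "\<dots> = V Q * (?Z / ?Z)"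
      by (simp add: divide_ennreal_def ac_simps)
    also have "\<dots> = V Q"
      using \<open>?Z \<noteq> 0\<close> False by (simp add: less_top)
    finally show ?thesis .
  qed simp
  have "W\<^sup>2 * ?x = (\<integral>\<^sup>+Q. W\<^sup>2 * inverse (soft_partition \<alpha> A (f Q)) \<partial>M)"
    by (rule nn_integral_cmult[symmetric]) measurable
  also have "\<dots> \<le> (\<integral>\<^sup>+Q. V Q \<partial>M)"
    using pointwise by (rule nn_integral_mono)
  also have "\<dots> \<le> ?c * W"
    using nn_integral_soft_partition_deviation_le[OF assms(1,2), of "-1"] by (simp add: V_def W_def)
  finally have "W * (?x * W) \<le> W * ?c"
    by (simp add: power2_eq_square ac_simps)
  then show ?thesis
    using assms(3) by (cases "W = 0") (simp_all add: W_def ennreal_mult_le_mult_iff)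
qed

lemma AE_soft_partition_eq_top:
  assumes "soft_partition \<alpha> A mean = \<infinity>"
  shows "AE Q in M. soft_partition \<alpha> A (f Q) = \<infinity>"
proof -
  define B where "B n = {a\<in>A. mean a \<le> real n}" for n :: nat
  let ?x = "\<integral>\<^sup>+Q. inverse (soft_partition \<alpha> A (f Q)) \<partial>M"
  let ?c = "ennreal (exp (sup_variance / (2 * \<alpha>\<^sup>2)))"
  have B_sets[measurable]: "B n \<in> sets lborel" for n
    unfolding B_def by measurable
  have "?x * soft_partition \<alpha> (B n) mean \<le> ?c" for n
  proof (rule nn_integral_inverse_soft_partition_le)
    show "B n \<subseteq> A"
      by (auto simp: B_def)
    have B_finite: "emeasure lborel (B n) < \<infinity>"
      using emeasure_mono[OF \<open>B n \<subseteq> A\<close> sets_A] emeasure_A_finite by simp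
    show "soft_partition \<alpha> (B n) mean < \<infinity>"
      by (rule soft_partition_less_top[OF B_sets measurable_mean B_finite alpha_pos, of "real n"])
        (simp add: B_def)
  qed (rule B_sets)
  then have "?x * (SUP n. soft_partition \<alpha> (B n) mean) \<le> ?c"
    by (simp add: SUP_mult_left_ennreal SUP_least)
  then have "?x * \<infinity> \<le> ?c"
    using SUP_soft_partition_sublevel[OF sets_A measurable_mean, of \<alpha>] assms
    by (simp only: B_def)
  then have "?x = 0"
    by (cases "?x = 0") (simp_all add: ennreal_mult_top top_unique)
  then show ?thesis
    by (simp add: nn_integral_0_iff_AE)
qed

lemma
  assumes finite: "soft_partition \<alpha> A mean < \<infinity>"
  shows integrable_real_soft_partition:
      "integrable M (\<lambda>Q. enn2real (soft_partition \<alpha> A (f Q)))"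
    and expectation_real_soft_partition_le:
      "expectation (\<lambda>Q. enn2real (soft_partition \<alpha> A (f Q)))
        \<le> exp (sup_variance / (2 * \<alpha>\<^sup>2)) * enn2real (soft_partition \<alpha> A mean)"
    and AE_real_soft_partition_pos: "AE Q in M. 0 < enn2real (soft_partition \<alpha> A (f Q))"
proof -
  let ?z = "\<lambda>Q. enn2real (soft_partition \<alpha> A (f Q))"
  let ?C = "exp (sup_variance / (2 * \<alpha>\<^sup>2)) * enn2real (soft_partition \<alpha> A mean)"
  have bound: "(\<integral>\<^sup>+Q. soft_partition \<alpha> A (f Q) \<partial>M) \<le> ennreal ?C"
    using nn_integral_soft_partition_le finite by (simp add: ennreal_mult less_top)
  then have AE_finite: "AE Q in M. soft_partition \<alpha> A (f Q) \<noteq> \<infinity>"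
    by (intro nn_integral_PInf_AE) (auto simp: top_unique)
  then have nn_integral_z:
      "(\<integral>\<^sup>+Q. ennreal (?z Q) \<partial>M) = (\<integral>\<^sup>+Q. soft_partition \<alpha> A (f Q) \<partial>M)"
    by (intro nn_integral_cong_AE) (auto simp: less_top)
  show integrable_z: "integrable M ?z"
  proof (rule integrableI_bounded)
    have "(\<integral>\<^sup>+Q. ennreal (norm (?z Q)) \<partial>M) = (\<integral>\<^sup>+Q. ennreal (?z Q) \<partial>M)"
      by simp
    also have "\<dots> \<le> ennreal ?C"
      using bound by (simp only: nn_integral_z)
    finally show "(\<integral>\<^sup>+Q. ennreal (norm (?z Q)) \<partial>M) < \<infinity>"
      by (simp add: le_less_trans)
  qed measurable
  have "expectation ?z = enn2real (\<integral>\<^sup>+Q. ennreal (?z Q) \<partial>M)"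
    using borel_measurable_integrable[OF integrable_z] by (rule integral_eq_nn_integral) simp
  also have "\<dots> \<le> enn2real (ennreal ?C)"
    using bound unfolding nn_integral_z by (rule enn2real_mono) simp
  finally show "expectation ?z \<le> ?C"
    by simp
  show "AE Q in M. 0 < ?z Q"
    using AE_space AE_finite
  proof eventually_elim
    case (elim Q)
    then show ?case
      using soft_partition_pos[OF sets_A measurable_section emeasure_A_pos, where \<alpha>=\<alpha>]
      by (simp add: enn2real_positive_iff less_top)
  qed
qed

lemma expectation_soft_value_le_of_finite:
  assumes finite: "soft_partition \<alpha> A mean < \<infinity>"
    and integrable: "integrable M (\<lambda>Q. soft_value \<alpha> A (f Q))"
  shows "expectation (\<lambda>Q. soft_value \<alpha> A (f Q))
    \<le> soft_value \<alpha> A mean + sup_variance / (2 * \<alpha>)"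
proof -
  define I where "I = enn2real (soft_partition \<alpha> A mean)"
  let ?z = "\<lambda>Q. enn2real (soft_partition \<alpha> A (f Q))"
  note integrable_z = integrable_real_soft_partition[OF finite]
  note z_pos = AE_real_soft_partition_pos[OF finite]
  have I_pos: "0 < I"
    using soft_partition_pos[OF sets_A measurable_mean emeasure_A_pos, where \<alpha>=\<alpha>] finite
    by (simp add: I_def enn2real_positive_iff)
  have soft_value_eq: "soft_value \<alpha> A (f Q) = \<alpha> * ln (?z Q)" if "Q \<in> space M" for Q
    using soft_value_eq_ln_soft_partition[OF sets_A measurable_section[OF that]] by simp
  have "integrable M (\<lambda>Q. ln (?z Q))
      \<longleftrightarrow> integrable M (\<lambda>Q. soft_value \<alpha> A (f Q) / \<alpha>)"
    using alpha_pos by (intro Bochner_Integration.integrable_cong) (simp_all add: soft_value_eq)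
  then have integrable_ln_z: "integrable M (\<lambda>Q. ln (?z Q))"
    using integrable by simp
  have "expectation (\<lambda>Q. soft_value \<alpha> A (f Q)) = \<alpha> * expectation (\<lambda>Q. ln (?z Q))"
    by (simp cong: Bochner_Integration.integral_cong add: soft_value_eq)
  also have "\<dots> \<le> \<alpha> * ln (expectation ?z)"
    using expectation_ln_le_ln_expectation[OF integrable_z z_pos integrable_ln_z] alpha_pos
    by simp
  also have "\<dots> \<le> \<alpha> * ln (exp (sup_variance / (2 * \<alpha>\<^sup>2)) * I)"
    using expectation_real_soft_partition_le[OF finite, folded I_def]
      expectation_greater[OF integrable_z z_pos] alpha_pos
    by simp
  also have "\<dots> = \<alpha> * ln I + sup_variance / (2 * \<alpha>)"
    using I_pos alpha_pos by (simp add: ln_mult power2_eq_square field_simps)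
  also have "\<alpha> * ln I = soft_value \<alpha> A mean"
    by (simp add: soft_value_eq_ln_soft_partition[OF sets_A measurable_mean] I_def)
  finally show ?thesis .
qed

lemma expectation_soft_value_le:
  assumes "integrable M (\<lambda>Q. soft_value \<alpha> A (f Q))"
  shows "expectation (\<lambda>Q. soft_value \<alpha> A (f Q))
    \<le> soft_value \<alpha> A mean + sup_variance / (2 * \<alpha>)"
proof (cases "soft_partition \<alpha> A mean = \<infinity>")
  case True
  \<comment> \<open>Both soft values are then the junk value \<open>\<alpha> * ln 0 = 0\<close> of a non-integrable
    Bochner integral.\<close>
  have "AE Q in M. soft_value \<alpha> A (f Q) = 0"
    using AE_space AE_soft_partition_eq_top[OF True]
    by eventually_elim (simp add: soft_value_eq_ln_soft_partition[OF sets_A measurable_section])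
  then have "expectation (\<lambda>Q. soft_value \<alpha> A (f Q)) = expectation (\<lambda>_. 0)"
    using borel_measurable_integrable[OF assms] by (intro integral_cong_AE) simp_all
  moreover have "soft_value \<alpha> A mean = 0"
    using True by (simp add: soft_value_eq_ln_soft_partition[OF sets_A measurable_mean])
  ultimately show ?thesis
    using sup_variance_nonneg alpha_pos by simp
next
  case False
  then show ?thesis
    using assms by (intro expectation_soft_value_le_of_finite) (simp_all add: less_top)
qed

end

theorem theorem2:
  fixes A :: "'a::euclidean_space set"
    and R :: "'s \<Rightarrow> 'a \<Rightarrow> real"
    and \<tau> :: "'s \<Rightarrow> 'a \<Rightarrow> 's measure"
    and QQ :: "('s \<Rightarrow> 'a \<Rightarrow> real) measure"
    and \<sigma>2 :: "'s \<Rightarrow> 'a \<Rightarrow> real"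
    and \<gamma> \<alpha> :: real
  assumes A_meas: "A \<in> sets lborel"
    and A_pos: "0 < emeasure lborel A" and A_fin: "emeasure lborel A < \<infinity>"
    and kernel: "\<And>s a. prob_space (\<tau> s a)"
    and gamma: "0 < \<gamma>" "\<gamma> < 1"
    and alpha: "0 < \<alpha>"
    and QQ_prob: "prob_space QQ"
    and Q_meas: "\<And>s. (\<lambda>(Q, a). Q s a) \<in> borel_measurable (QQ \<Otimes>\<^sub>M lborel)"
    and bounded_support: "\<And>s a. \<exists>B. AE Q in QQ. \<bar>Q s a\<bar> \<le> B"
    and subgauss: "\<And>s a. sub_gaussian QQ (\<lambda>Q. Q s a) (\<sigma>2 s a)"
    and wd_QQ: "\<And>s'. integrable QQ (\<lambda>Q. soft_value \<alpha> A (Q s'))"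
    and wd_TQ: "\<And>s a. integrable (\<tau> s a) (\<lambda>s'. \<integral>Q. soft_value \<alpha> A (Q s') \<partial>QQ)"
    and wd_Tmu: "\<And>s a. integrable (\<tau> s a) (\<lambda>s'. soft_value \<alpha> A (mean_Q QQ s'))"
    and wd_sup_bdd: "\<And>s'. bdd_above (\<sigma>2 s' ` A)"
    and wd_sup: "\<And>s a. integrable (\<tau> s a) (\<lambda>s'. SUP a'\<in>A. \<sigma>2 s' a')"
  shows "\<forall>s. \<forall>a\<in>A. overest_error R \<gamma> \<alpha> A \<tau> QQ s a
           \<le> \<gamma> / (2 * \<alpha>) * (\<integral>s'. (SUP a'\<in>A. \<sigma>2 s' a') \<partial>\<tau> s a)"
proof (intro allI ballI)
  fix s a
  interpret \<tau>: prob_space "\<tau> s a"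
    by (rule kernel)
  define V where "V = (\<lambda>s'. \<integral>Q. soft_value \<alpha> A (Q s') \<partial>QQ)"
  define U where "U = (\<lambda>s'. soft_value \<alpha> A (mean_Q QQ s'))"
  define S where "S = (\<lambda>s'. SUP a'\<in>A. \<sigma>2 s' a')"
  have V_le: "V s' \<le> U s' + S s' / (2 * \<alpha>)" for s'
  proof -
    interpret sub_gaussian_random_field QQ "\<lambda>Q a. Q s' a" "\<sigma>2 s'" A \<alpha>
      using QQ_prob Q_meas A_meas A_pos A_fin alpha bounded_support subgauss wd_sup_bdd
      by (simp add: sub_gaussian_random_field_def sub_gaussian_random_field_axioms_def)
    have "mean = mean_Q QQ s'"
      by (simp add: fun_eq_iff mean_def mean_Q_def)
    then show ?thesis
      using expectation_soft_value_le[OF wd_QQ] by (simp add: V_def U_def S_def sup_variance_def)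
  qed
  have integrable: "integrable (\<tau> s a) V" "integrable (\<tau> s a) U" "integrable (\<tau> s a) S"
    using wd_TQ wd_Tmu wd_sup by (simp_all only: V_def U_def S_def)
  have "overest_error R \<gamma> \<alpha> A \<tau> QQ s a = \<gamma> * (\<integral>s'. V s' - U s' \<partial>\<tau> s a)"
    using integrable
    by (simp add: overest_error_def bellman_Q_def bellman_mu_def V_def U_def \<tau>.prob_space
        algebra_simps)
  also have "\<dots> \<le> \<gamma> * (\<integral>s'. S s' / (2 * \<alpha>) \<partial>\<tau> s a)"
    using integrable V_le gamma by (intro mult_left_mono integral_mono) (auto simp: algebra_simps)
  finally show "overest_error R \<gamma> \<alpha> A \<tau> QQ s a
      \<le> \<gamma> / (2 * \<alpha>) * (\<integral>s'. (SUP a'\<in>A. \<sigma>2 s' a') \<partial>\<tau> s a)"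
    by (simp add: S_def)
qed

end
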